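(* Let $M$ be an abelian group and $\mathcal{A}=\bigoplus_{\chi\in M}\mathcal{A}^\chi$ a finite-dimensional commutative unital $M$-graded $\mathbb{C}$-algebra (so $\mathcal{A}^\chi\mathcal{A}^\psi\subseteq\mathcal{A}^{\chi+\psi}$). Suppose there exist an integer $d>0$ and $\chi\in M$ with $\dim\mathcal{A}^\chi>\dim\mathcal{A}^{d\chi}$. Then there exists $\varepsilon\in\mathcal{A}\setminus\{0\}$ with $\varepsilon^d=0$. *)

theory Defs
  imports Complex_Main
begin

definition natmul :: "nat \<Rightarrow> 'm::ab_group_add \<Rightarrow> 'm" where
  "natmul n x = (\<Sum>_<n. x)"

text \<open>The grading Agr assigns to every degree a subspace, the whole algebra is the
  internal direct sum of these subspaces (every element is uniquely a finitely
  supported sum of homogeneous components), and Agr chi * Agr psi lies in Agr (chi+psi).\<close>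
definition graded_fd_calgebra ::
  "(complex \<Rightarrow> 'a::comm_ring_1 \<Rightarrow> 'a) \<Rightarrow> ('m::ab_group_add \<Rightarrow> 'a set) \<Rightarrow> bool" where
  "graded_fd_calgebra sc Agr \<longleftrightarrow>
     vector_space sc \<and>
     (\<forall>c x y. sc c (x * y) = sc c x * y) \<and>
     (\<exists>B. finite B \<and> module.span sc B = UNIV) \<and>
     (\<forall>\<chi>. module.subspace sc (Agr \<chi>)) \<and>
     (\<forall>x. \<exists>!f. finite {\<chi>. f \<chi> \<noteq> 0} \<and> (\<forall>\<chi>. f \<chi> \<in> Agr \<chi>) \<and>
              x = (\<Sum>\<chi>\<in>{\<chi>. f \<chi> \<noteq> 0}. f \<chi>)) \<and>
     (\<forall>\<chi> \<psi> x y. x \<in> Agr \<chi> \<longrightarrow> y \<in> Agr \<psi> \<longrightarrow> x * y \<in> Agr (\<chi> + \<psi>))"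

end

theory Submission
  imports Defs
begin

text \<open>If no nonzero element has vanishing \<open>d\<close>-th power (\<open>d \<ge> 2\<close>), the algebra is reduced.
  Pick \<open>x\<close> in the graded piece \<open>A\<^sub>\<chi>\<close> whose annihilator has minimal dimension. If
  \<open>0 \<noteq> y \<in> A\<^sub>\<chi>\<close> and \<open>x y = 0\<close>, reducedness makes the annihilator of \<open>x + y\<close> strictly smaller,
  so multiplication by \<open>x\<close> is injective on \<open>A\<^sub>\<chi>\<close>. Hence so is multiplication by \<open>x ^ (d - 1)\<close>,
  since \<open>(x y) ^ d = (x ^ (d - 1) y) (x y ^ (d - 1))\<close>, and it maps \<open>A\<^sub>\<chi>\<close> into \<open>A\<^sub>d\<^sub>\<chi>\<close>.
  Thus \<open>dim A\<^sub>\<chi> \<le> dim A\<^sub>d\<^sub>\<chi>\<close>.\<close>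

lemma natmul_Suc: "natmul (Suc k) x = x + natmul k x"
  by (simp add: natmul_def)

lemma reduced_power_eq_0:
  fixes z :: "'a::comm_ring_1"
  assumes reduced: "\<And>w::'a. w * w = 0 \<Longrightarrow> w = 0"
    and "z ^ Suc n = 0"
  shows "z = 0"
  using assms(2)
proof (induction n)
  case 0
  then show ?case by simp
next
  case (Suc n)
  have "z ^ Suc n * z ^ Suc n = z ^ Suc (Suc n) * z ^ n"
    by (simp add: power_add[symmetric])
  then have "z ^ Suc n * z ^ Suc n = 0"
    using Suc.prems by (metis mult_zero_left)
  then show ?case
    using Suc.IH reduced by blast
qed

definition annihilator :: "'a::comm_ring_1 \<Rightarrow> 'a set" where
  "annihilator x = {z. z * x = 0}"

lemma annihilator_add_psubset:
  fixes x y :: "'a::comm_ring_1"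
  assumes reduced: "\<And>w::'a. w * w = 0 \<Longrightarrow> w = 0"
    and "x * y = 0" and "y \<noteq> 0"
  shows "annihilator (x + y) \<subset> annihilator x"
proof -
  have "z * x = 0" if "z * (x + y) = 0" for z
  proof -
    have "z * x = - (z * y)"
      using that by (simp add: distrib_left eq_neg_iff_add_eq_0)
    then have "z * x * x = - (z * (x * y))"
      by (simp add: ac_simps)
    then have "z * x * x = 0"
      using \<open>x * y = 0\<close> by simp
    moreover have "(z * x) * (z * x) = z * (z * x * x)"
      by (simp add: ac_simps)
    ultimately have "(z * x) * (z * x) = 0"
      by simp
    then show ?thesis
      by (rule reduced)
  qed
  moreover have "y \<in> annihilator x"
    using \<open>x * y = 0\<close> by (simp add: annihilator_def mult.commute)
  moreover have "y \<notin> annihilator (x + y)"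
  proof -
    have "y * (x + y) = y * y"
      using \<open>x * y = 0\<close> by (simp add: distrib_left mult.commute)
    moreover have "y * y \<noteq> 0"
      using reduced \<open>y \<noteq> 0\<close> by blast
    ultimately show ?thesis
      unfolding annihilator_def by simp
  qed
  ultimately show ?thesis
    unfolding annihilator_def by blast
qed

lemma power_mult_mem_grade:
  fixes A :: "'m::ab_group_add \<Rightarrow> 'a::comm_ring_1 set"
  assumes mult: "\<And>\<chi> \<psi> x y. x \<in> A \<chi> \<Longrightarrow> y \<in> A \<psi> \<Longrightarrow> x * y \<in> A (\<chi> + \<psi>)"
    and "x \<in> A \<chi>" and "y \<in> A \<chi>"
  shows "x ^ k * y \<in> A (natmul (Suc k) \<chi>)"
proof (induction k)
  case 0
  then show ?case using \<open>y \<in> A \<chi>\<close> by (simp add: natmul_def)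
next
  case (Suc k)
  then have "x * (x ^ k * y) \<in> A (\<chi> + natmul (Suc k) \<chi>)"
    using mult \<open>x \<in> A \<chi>\<close> by blast
  then show ?case
    by (simp add: natmul_Suc[of "Suc k"] mult.assoc)
qed

lemma (in vector_space) obtain_basis_of_finite_span:
  assumes "finite B" and "span B = UNIV"
  obtains C where "finite C" "independent C" "span C = UNIV"
proof -
  obtain C where "C \<subseteq> B" "independent C" "B \<subseteq> span C"
    using maximal_independent_subset[of B] by blast
  moreover have "span C = UNIV"
    using \<open>B \<subseteq> span C\<close> assms(2) by (metis span_mono span_span top.extremum_unique)
  ultimately show ?thesis
    using that \<open>finite B\<close> finite_subset by blast
qed

locale finite_dimensional_algebra = finite_dimensional_vector_space scale basis
  for scale :: "'k::field \<Rightarrow> 'a::comm_ring_1 \<Rightarrow> 'a" and basis :: "'a set" +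
  assumes scale_mult_left: "scale c (x * y) = scale c x * y"
begin

lemma linear_mult_left: "Vector_Spaces.linear scale scale ((*) a)"
  unfolding Vector_Spaces.linear_iff
  by (simp add: vector_space_axioms distrib_left) (metis scale_mult_left mult.commute)

lemma subspace_annihilator: "subspace (annihilator x)"
  unfolding subspace_def annihilator_def
  by (simp add: distrib_right) (metis scale_mult_left scale_zero_right)

lemma span_annihilator: "span (annihilator x) = annihilator x"
  using subspace_annihilator by simp

lemma inj_on_mult_left_iff:
  assumes "subspace S"
  shows "inj_on ((*) a) S \<longleftrightarrow> (\<forall>y\<in>S. a * y = 0 \<longrightarrow> y = 0)"
proof -
  have "a * y = a * y' \<longleftrightarrow> a * (y - y') = 0" for y y'
    by (simp add: right_diff_distrib)
  then show ?thesis
    using assms subspace_diff subspace_0 unfolding inj_on_def by (metis eq_iff_diff_eq_0)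
qed

lemma dim_image_mult_left:
  assumes "subspace S" and "inj_on ((*) a) S"
  shows "dim ((*) a ` S) = dim S"
proof -
  interpret pair: finite_dimensional_vector_space_pair_1 scale basis scale ..
  have "span S = S"
    using assms(1) by (rule span_eq_iff[THEN iffD2])
  then show ?thesis
    using pair.dim_image_eq[OF linear_mult_left, of a S] assms(2) by argo
qed

lemma obtain_regular_element:
  assumes reduced: "\<And>w::'a. w * w = 0 \<Longrightarrow> w = 0"
    and "subspace S"
  obtains x where "x \<in> S" "\<And>y. y \<in> S \<Longrightarrow> x * y = 0 \<Longrightarrow> y = 0"
proof -
  obtain x where "x \<in> S" and minimal: "\<And>x'. x' \<in> S \<Longrightarrow> dim (annihilator x) \<le> dim (annihilator x')"
    using ex_has_least_nat[of "\<lambda>x. x \<in> S" 0 "\<lambda>x. dim (annihilator x)"] subspace_0[OF \<open>subspace S\<close>]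
    by blast
  have "y = 0" if "y \<in> S" "x * y = 0" for y
  proof (rule ccontr)
    assume "y \<noteq> 0"
    then have "annihilator (x + y) \<subset> annihilator x"
      using annihilator_add_psubset reduced \<open>x * y = 0\<close> by blast
    then have "dim (annihilator (x + y)) < dim (annihilator x)"
      using dim_psubset span_annihilator by metis
    moreover have "x + y \<in> S"
      using \<open>x \<in> S\<close> \<open>y \<in> S\<close> \<open>subspace S\<close> subspace_add by blast
    ultimately show False
      using minimal not_le by blast
  qed
  then show ?thesis
    using that \<open>x \<in> S\<close> by blast
qed

lemma dim_grade_le_dim_grade_natmul:
  fixes A :: "'m::ab_group_add \<Rightarrow> 'a set"
  assumes reduced: "\<And>w::'a. w * w = 0 \<Longrightarrow> w = 0"
    and subspace_grade: "\<And>\<chi>. subspace (A \<chi>)"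
    and mult: "\<And>\<chi> \<psi> x y. x \<in> A \<chi> \<Longrightarrow> y \<in> A \<psi> \<Longrightarrow> x * y \<in> A (\<chi> + \<psi>)"
  shows "dim (A \<chi>) \<le> dim (A (natmul (Suc k) \<chi>))"
proof -
  obtain x where "x \<in> A \<chi>" and regular: "\<And>y. y \<in> A \<chi> \<Longrightarrow> x * y = 0 \<Longrightarrow> y = 0"
    using obtain_regular_element[OF reduced subspace_grade] by blast
  have "y = 0" if "y \<in> A \<chi>" "x ^ k * y = 0" for y
  proof -
    have "(x * y) ^ Suc k = (x ^ k * y) * (x * y ^ k)"
      by (simp add: power_mult_distrib ac_simps)
    then have "(x * y) ^ Suc k = 0"
      using \<open>x ^ k * y = 0\<close> by simp
    then have "x * y = 0"
      using reduced_power_eq_0 reduced by blast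
    then show ?thesis
      using regular \<open>y \<in> A \<chi>\<close> by blast
  qed
  then have "inj_on ((*) (x ^ k)) (A \<chi>)"
    using inj_on_mult_left_iff[OF subspace_grade] by blast
  then have "dim (A \<chi>) = dim ((*) (x ^ k) ` A \<chi>)"
    using dim_image_mult_left subspace_grade by simp
  also have "\<dots> \<le> dim (A (natmul (Suc k) \<chi>))"
    using power_mult_mem_grade[OF mult \<open>x \<in> A \<chi>\<close>] by (intro dim_subset) blast
  finally show ?thesis .
qed

end

lemma graded_fd_calgebra_dim_grade_le:
  fixes sc :: "complex \<Rightarrow> 'a::comm_ring_1 \<Rightarrow> 'a"
    and Agr :: "'m::ab_group_add \<Rightarrow> 'a set"
  assumes "graded_fd_calgebra sc Agr"
    and reduced: "\<And>w::'a. w * w = 0 \<Longrightarrow> w = 0"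
  shows "vector_space.dim sc (Agr \<chi>) \<le> vector_space.dim sc (Agr (natmul (Suc k) \<chi>))"
proof -
  from assms(1) have "vector_space sc"
    and scale_mult: "\<And>c x y. sc c (x * y) = sc c x * y"
    and finite_span: "\<exists>B. finite B \<and> module.span sc B = UNIV"
    and subspace_grade: "\<And>\<chi>. module.subspace sc (Agr \<chi>)"
    and mult: "\<And>\<chi> \<psi> x y. x \<in> Agr \<chi> \<Longrightarrow> y \<in> Agr \<psi> \<Longrightarrow> x * y \<in> Agr (\<chi> + \<psi>)"
    unfolding graded_fd_calgebra_def by blast+
  interpret vector_space sc by fact
  obtain C where "finite C" "independent C" "span C = UNIV"
    using finite_span obtain_basis_of_finite_span by blast
  then interpret finite_dimensional_algebra sc C
    using scale_mult by unfold_locales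
  show ?thesis
    using dim_grade_le_dim_grade_natmul[where A = Agr, OF reduced subspace_grade mult] .
qed

theorem lemma2p1:
  fixes sc :: "complex \<Rightarrow> 'a::comm_ring_1 \<Rightarrow> 'a"
    and Agr :: "'m::ab_group_add \<Rightarrow> 'a set"
    and d :: nat and \<chi> :: 'm
  assumes "graded_fd_calgebra sc Agr"
    and "d > 0"
    and "vector_space.dim sc (Agr \<chi>) > vector_space.dim sc (Agr (natmul d \<chi>))"
  shows "\<exists>\<epsilon>::'a. \<epsilon> \<noteq> 0 \<and> \<epsilon> ^ d = 0"
proof (rule ccontr)
  assume no_nilpotent: "\<not> ?thesis"
  have "d \<noteq> 1"
    using assms(3) by (auto simp: natmul_def)
  then obtain k where d: "d = Suc (Suc k)"
    using assms(2) by (metis One_nat_def Suc_pred not0_implies_Suc)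
  have reduced: "w = 0" if "w * w = 0" for w :: 'a
  proof -
    have "w ^ d = (w * w) * w ^ k"
      by (simp add: d mult.assoc)
    then have "w ^ d = 0"
      using that by simp
    then show ?thesis
      using no_nilpotent by blast
  qed
  have "vector_space.dim sc (Agr \<chi>) \<le> vector_space.dim sc (Agr (natmul d \<chi>))"
    unfolding d by (rule graded_fd_calgebra_dim_grade_le[OF assms(1) reduced])
  then show False
    using assms(3) by simp
qed

end
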